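(* For every integer $k\ge 3$, let $T_k$ be the minimal $t\in\mathbb{N}$ such that for every $n\in\mathbb{N}$, every equinumerous $t$-coloring of $[tn]=\{1,2,\dots,tn\}$ contains a rainbow arithmetic progression of length $k$. Then $$T_k\le k^2\, e^{(1+o(1))(\ln\ln k)^2}\qquad\text{as } k\to\infty,$$ i.e., there is a function $\varepsilon(k)$ with $\varepsilon(k)\to 0$ as $k\to\infty$ such that $T_k\le k^2 \exp\big((1+\varepsilon(k))(\ln\ln k)^2\big)$ for all sufficiently large $k$.
   Context: An equinumerous $t$-coloring of a finite set is a coloring with $t$ colors in which each color is used exactly the same number of times (so in an equinumerous $t$-coloring of $[tn]$ each color class has exactly $n$ elements). Given a coloring of $[N]$, an arithmetic progression $a, a+d, \dots, a+(k-1)d$ (with $d\ge 1$) contained in $[N]$ is rainbow if its $k$ terms all receive distinct colors. $\ln$ denotes the natural logarithm. *)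

theory Defs
  imports Complex_Main
begin

definition equinumerous_coloring :: "nat \<Rightarrow> nat \<Rightarrow> (nat \<Rightarrow> nat) \<Rightarrow> bool" where
  "equinumerous_coloring t n c \<longleftrightarrow>
     c ` {1..t*n} \<subseteq> {..<t} \<and> (\<forall>j<t. card {x \<in> {1..t*n}. c x = j} = n)"

definition has_rainbow_AP :: "nat \<Rightarrow> nat \<Rightarrow> (nat \<Rightarrow> nat) \<Rightarrow> bool" where
  "has_rainbow_AP k N c \<longleftrightarrow>
     (\<exists>a d. 1 \<le> d \<and> 1 \<le> a \<and> a + (k - 1) * d \<le> N \<and> inj_on (\<lambda>i. c (a + i * d)) {..<k})"

definition good :: "nat \<Rightarrow> nat \<Rightarrow> bool" where
  "good k t \<longleftrightarrow> (\<forall>n\<ge>1. \<forall>c. equinumerous_coloring t n c \<longrightarrow> has_rainbow_AP k (t*n) c)"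

definition T :: "nat \<Rightarrow> nat" where
  "T k = (LEAST t. good k t)"

end

theory Submission
  imports Defs "HOL-Computational_Algebra.Primes" "HOL-Analysis.Harmonic_Numbers"
    "HOL-Real_Asymp.Real_Asymp"
begin

text \<open>
  Suppose an equinumerous \<open>t\<close>-colouring of \<open>[N]\<close>, \<open>N = t n\<close>, has no rainbow \<open>k\<close>-term
  progression. Then for every start \<open>a \<le> N/2\<close> and every difference \<open>d \<le> N/(2k)\<close> the progression
  \<open>a, a + d, ..., a + (k - 1) d\<close> contains a monochromatic pair \<open>a + i d, a + j d\<close> with \<open>i < j\<close>.
  If \<open>d\<close> has no prime factor below \<open>k\<close>, this pair together with \<open>i\<close> determines \<open>(a, d)\<close>:
  the difference of the pair is \<open>(j - i) d\<close> with \<open>0 < j - i < k\<close> coprime to \<open>d\<close>. There are at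
  most \<open>t n\<^sup>2\<close> monochromatic pairs, so \<open>(N/2) |R| \<le> k t n\<^sup>2 = k N\<^sup>2 / t\<close> for the set \<open>R\<close>
  of such differences.

  Brun's pure sieve (for large \<open>N\<close>) and Chebyshev's bound \<open>\<pi>(D) \<ge> D / (2 ln D)\<close> (for
  smaller \<open>N\<close>) give \<open>|R| \<ge> \<rho>\<^sub>k N / (4k)\<close> with \<open>1/\<rho>\<^sub>k = O((ln k)\<^sup>4)\<close>, since the sum of
  \<open>1/p\<close> over the primes \<open>p < k\<close> is at most \<open>5/2 + 2 ln (log\<^sub>2 k)\<close>. Hence \<open>T\<^sub>k \<le> 12 k\<^sup>2/\<rho>\<^sub>k + 1 = O(k\<^sup>2 (ln k)\<^sup>4)\<close>,
  which is eventually below \<open>k\<^sup>2 exp ((ln ln k)\<^sup>2)\<close>; so \<open>\<epsilon> = 0\<close> works.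
\<close>

section \<open>Chebyshev-type estimates\<close>

lemma prod_primes_dvd_iff:
  fixes A :: "nat set"
  assumes "finite A" and "\<forall>p\<in>A. prime p"
  shows "\<Prod>A dvd d \<longleftrightarrow> (\<forall>p\<in>A. p dvd d)"
  using assms
proof (induction A rule: finite_induct)
  case empty
  then show ?case by simp
next
  case (insert p A)
  have "\<not> p dvd \<Prod>A"
    using insert by (auto simp: prime_dvd_prod_iff dest: primes_dvd_imp_eq)
  then have "coprime p (\<Prod>A)"
    using insert by (simp add: prime_imp_coprime)
  then have "p * \<Prod>A dvd d \<longleftrightarrow> p dvd d \<and> \<Prod>A dvd d"
    by (auto intro: divides_mult dvd_mult_left dvd_mult_right)
  then show ?case
    using insert by simp
qed

lemma multiplicity_fact_prime:
  fixes p :: nat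
  assumes p: "prime p" and "n \<le> b"
  shows "multiplicity p (fact n :: nat) = (\<Sum>i=1..b. n div p ^ i)"
  using \<open>n \<le> b\<close>
proof (induction n)
  case 0
  then show ?case by simp
next
  case (Suc n)
  define I where "I = {i\<in>{1..b}. p ^ i dvd Suc n}"
  have "\<not> p ^ Suc (Suc n) dvd Suc n"
    using power_gt_expt[of p "Suc (Suc n)"] prime_gt_1_nat[OF p] by (auto dest: dvd_imp_le)
  then have "multiplicity p (Suc n) < Suc (Suc n)"
    using p by (intro multiplicity_lessI) auto
  then have "multiplicity p (Suc n) \<le> b"
    using Suc.prems by linarith
  moreover have "p ^ i dvd Suc n \<longleftrightarrow> i \<le> multiplicity p (Suc n)" for i
    using p by (intro power_dvd_iff_le_multiplicity) auto
  ultimately have "I = {1..multiplicity p (Suc n)}"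
    unfolding I_def atLeastAtMost_def
    by (auto simp only: mem_Collect_eq Int_iff atLeast_iff atMost_iff)
  then have mult_Suc: "multiplicity p (Suc n) = card I"
    by simp
  have "(\<Sum>i=1..b. Suc n div p ^ i) = (\<Sum>i=1..b. n div p ^ i + of_bool (i \<in> I))"
    by (intro sum.cong) (simp_all add: I_def div_Suc dvd_eq_mod_eq_0)
  also have "\<dots> = (\<Sum>i=1..b. n div p ^ i) + card I"
    by (simp add: sum.distrib I_def Int_def)
  finally have "(\<Sum>i=1..b. Suc n div p ^ i) = (\<Sum>i=1..b. n div p ^ i) + card I" .
  moreover have "multiplicity p (Suc n * fact n) = multiplicity p (Suc n) + multiplicity p (fact n :: nat)"
    using p by (intro prime_elem_multiplicity_mult_distrib) auto
  ultimately show ?case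
    using Suc mult_Suc by (simp only: fact_Suc of_nat_id)
qed

lemma div_double_le: "(2 * m) div q \<le> 2 * (m div q) + of_bool (q \<le> 2 * m)" for m q :: nat
proof (cases "0 < q \<and> q \<le> 2 * m")
  case True
  then have "m < q + m div q * q"
    by (simp add: dividend_less_div_times)
  then have "2 * m < (2 * (m div q) + 2) * q"
    by (simp add: algebra_simps)
  then have "(2 * m) div q < 2 * (m div q) + 2"
    by (metis True div_less_iff_less_mult)
  then show ?thesis
    using True by simp
qed auto

lemma prime_power_multiplicity_central_binomial_le:
  fixes p m :: nat
  assumes p: "prime p" and "m \<ge> 1"
  shows "p ^ multiplicity p ((2 * m) choose m) \<le> 2 * m"
proof (rule ccontr)
  define v where "v = multiplicity p ((2 * m) choose m)"
  define S where "S = {i\<in>{1..2*m}. p ^ i \<le> 2 * m}"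
  assume "\<not> p ^ multiplicity p ((2 * m) choose m) \<le> 2 * m"
  then have big: "2 * m < p ^ v"
    by (simp add: v_def)
  have "fact (2 * m) = fact m * fact m * ((2 * m) choose m)"
    using binomial_fact_lemma[of m "2 * m"] by simp
  then have "multiplicity p (fact (2 * m) :: nat) = 2 * multiplicity p (fact m :: nat) + v"
    using p by (simp add: v_def prime_elem_multiplicity_mult_distrib)
  moreover have "(\<Sum>i=1..2*m. (2 * m) div p ^ i) \<le> 2 * (\<Sum>i=1..2*m. m div p ^ i) + card S"
  proof -
    have "(\<Sum>i=1..2*m. (2 * m) div p ^ i) \<le> (\<Sum>i=1..2*m. 2 * (m div p ^ i) + of_bool (i \<in> S))"
      by (intro sum_mono) (use div_double_le in \<open>auto simp: S_def\<close>)
    also have "\<dots> = 2 * (\<Sum>i=1..2*m. m div p ^ i) + card S"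
      by (simp add: sum.distrib sum_distrib_left S_def Int_def)
    finally show ?thesis .
  qed
  \<comment> \<open>By Legendre's formula \<open>v\<close> is a sum of terms \<open>\<lfloor>2m/p\<^sup>i\<rfloor> - 2\<lfloor>m/p\<^sup>i\<rfloor> \<in> {0, 1}\<close> vanishing for \<open>p\<^sup>i > 2m\<close>.\<close>
  ultimately have "v \<le> card S"
    using multiplicity_fact_prime[OF p, of "2 * m" "2 * m"] multiplicity_fact_prime[OF p, of m "2 * m"]
    by simp
  moreover have "S \<subseteq> {1..<v}"
    using big prime_gt_1_nat[OF p] by (auto simp: S_def) (metis One_nat_def le_less_trans power_less_imp_less_exp)
  then have "card S \<le> v - 1"
    using card_mono[of "{1..<v}" S] by simp
  moreover have "v \<noteq> 0"
    using big \<open>m \<ge> 1\<close> by (intro notI) simp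
  ultimately show False
    by simp
qed

definition primepi :: "nat \<Rightarrow> nat" where
  "primepi x = card {p. prime p \<and> p \<le> x}"

lemma primepi_mono: "a \<le> b \<Longrightarrow> primepi a \<le> primepi b"
  unfolding primepi_def by (intro card_mono) auto

lemma central_binomial_le_power_primepi:
  fixes m :: nat
  assumes "m \<ge> 1"
  shows "(2 * m) choose m \<le> (2 * m) ^ primepi (2 * m)"
proof -
  define C where "C = (2 * m) choose m"
  have "C > 0"
    by (simp add: C_def)
  have "prime_factors C \<subseteq> {p. prime p \<and> p \<le> 2 * m}"
  proof
    fix p
    assume "p \<in> prime_factors C"
    moreover have "fact (2 * m) = fact m * fact m * C"
      using binomial_fact_lemma[of m "2 * m"] by (simp add: C_def)
    then have "C dvd fact (2 * m)"
      by (metis dvd_triv_right)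
    ultimately have "prime p" "p dvd fact (2 * m)"
      by (auto simp: in_prime_factors_iff intro: dvd_trans)
    then show "p \<in> {p. prime p \<and> p \<le> 2 * m}"
      by (simp add: prime_dvd_fact_iff)
  qed
  then have "card (prime_factors C) \<le> primepi (2 * m)"
    unfolding primepi_def by (intro card_mono) auto
  have "C = (\<Prod>p\<in>prime_factors C. p ^ multiplicity p C)"
    using prime_factorization_nat[OF \<open>C > 0\<close>] .
  also have "\<dots> \<le> (2 * m) ^ primepi (2 * m)"
    using \<open>card (prime_factors C) \<le> primepi (2 * m)\<close> \<open>m \<ge> 1\<close>
      prime_power_multiplicity_central_binomial_le
    by (intro prod_le_power) (auto simp: C_def in_prime_factors_iff)
  finally show ?thesis
    by (simp add: C_def)
qed

lemma prod_primes_between_le: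
  fixes m :: nat
  shows "\<Prod>{p. prime p \<and> m < p \<and> p \<le> 2 * m} \<le> 4 ^ m"
proof -
  define P where "P = {p. prime p \<and> m < p \<and> p \<le> 2 * m}"
  have "p dvd (2 * m) choose m" if "p \<in> P" for p
  proof -
    have "p dvd fact m * fact m * ((2 * m) choose m)"
      using binomial_fact_lemma[of m "2 * m"] that prime_dvd_fact_iff[of p "2 * m"]
      by (simp add: P_def)
    moreover have "\<not> p dvd fact m"
      using that prime_dvd_fact_iff[of p m] by (simp add: P_def)
    ultimately show ?thesis
      using that by (simp add: P_def prime_dvd_mult_iff)
  qed
  then have "\<Prod>P dvd (2 * m) choose m"
    by (subst prod_primes_dvd_iff) (auto simp: P_def)
  then have "\<Prod>P \<le> (2 * m) choose m"
    by (simp add: dvd_imp_le)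
  also have "\<dots> \<le> 4 ^ m"
    using binomial_le_pow2[of "2 * m" m] by (simp add: power_mult)
  finally show ?thesis
    by (simp add: P_def)
qed

lemma ln_add_one_le_div_6:
  fixes x :: real
  assumes "x \<ge> 200"
  shows "ln x + 1 \<le> x / 6"
proof -
  have "ln (16::real) = 4 * ln 2"
    using ln_realpow[of 2 4] by simp
  then have "ln (16::real) \<le> 4"
    using ln_2_less_1 by simp
  moreover have "ln (x / 16) \<le> x / 16 - 1"
    by (rule ln_le_minus_one) (use assms in simp)
  moreover have "ln x = ln (x / 16) + ln 16"
    using assms by (simp add: ln_div)
  ultimately show ?thesis
    using assms by simp
qed

lemma primepi_ge:
  fixes D :: nat
  assumes D: "D \<ge> 200"
  shows "real D / (2 * ln (real D)) \<le> real (primepi D)"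
proof -
  define m where "m = D div 2"
  have "m \<ge> 1" and m: "real D - 1 \<le> 2 * real m" "2 * m \<le> D"
    using D unfolding m_def by linarith+
  have "4 ^ m / (2 * real m) \<le> real ((2 * m) choose m)"
    using central_binomial_lower_bound[of m] \<open>m \<ge> 1\<close> by simp
  also have "\<dots> \<le> real ((2 * m) ^ primepi (2 * m))"
    using central_binomial_le_power_primepi[OF \<open>m \<ge> 1\<close>] by linarith
  also have "\<dots> \<le> real (D ^ primepi D)"
    using m D by (intro of_nat_mono order.trans[OF power_mono power_increasing] primepi_mono) auto
  finally have "ln (4 ^ m / (2 * real m)) \<le> ln (real D ^ primepi D)"
    using \<open>m \<ge> 1\<close> D by (subst ln_le_cancel_iff) auto
  then have "real m * ln 4 - ln (2 * real m) \<le> real (primepi D) * ln (real D)"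
    using \<open>m \<ge> 1\<close> D by (simp add: ln_div ln_realpow)
  moreover have "ln (2 * real m) \<le> ln (real D)"
    using \<open>m \<ge> 1\<close> m by (subst ln_le_cancel_iff) auto
  moreover have "2 / 3 * real D - 2 / 3 \<le> real m * ln 4"
  proof -
    have "ln (4::real) = 2 * ln 2"
      using ln_realpow[of 2 2] by simp
    moreover have "(real D - 1) * (2 / 3) \<le> (2 * real m) * ln 2"
      using m ln2_ge_two_thirds by (intro mult_mono) auto
    ultimately show ?thesis
      by (simp add: algebra_simps)
  qed
  moreover have "ln (real D) + 1 \<le> real D / 6"
    using ln_add_one_le_div_6[of "real D"] D by simp
  ultimately have "real D / 2 \<le> real (primepi D) * ln (real D)"
    by linarith
  moreover have "ln (real D) > 0"
    using D by simp
  ultimately show ?thesis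
    by (simp add: field_simps)
qed

lemma card_primes_between_pow2:
  "j * card {p::nat. prime p \<and> 2 ^ j < p \<and> p \<le> 2 ^ Suc j} \<le> 2 ^ Suc j"
proof -
  define P where "P = {p::nat. prime p \<and> 2 ^ j < p \<and> p \<le> 2 * 2 ^ j}"
  have "(\<Prod>p\<in>P. 2 ^ j) \<le> (\<Prod>p\<in>P. p)"
    by (intro prod_mono) (auto simp: P_def)
  then have "(2 ^ j) ^ card P \<le> \<Prod>P"
    by simp
  also have "\<dots> \<le> 4 ^ 2 ^ j"
    unfolding P_def by (rule prod_primes_between_le)
  finally have "(2::nat) ^ (j * card P) \<le> 2 ^ (2 * 2 ^ j)"
    by (simp add: power_mult)
  then show ?thesis
    by (simp add: P_def)
qed

lemma sum_inverse_primes_le_pow2: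
  "(\<Sum>p | prime p \<and> p \<le> 2 ^ Suc j. 1 / real p) \<le> 1 / 2 + 2 * harm j"
proof (induction j)
  case 0
  have "{p. prime p \<and> p \<le> (2::nat)} = {2}"
    using prime_ge_2_nat by (auto simp: le_Suc_eq intro: antisym)
  then show ?case
    by (simp add: harm_nonneg)
next
  case (Suc j)
  define P where "P = {p. prime p \<and> 2 ^ Suc j < p \<and> p \<le> (2::nat) ^ Suc (Suc j)}"
  have "(2::nat) ^ Suc j \<le> 2 ^ Suc (Suc j)"
    by simp
  then have "{p. prime p \<and> p \<le> (2::nat) ^ Suc (Suc j)} = {p. prime p \<and> p \<le> 2 ^ Suc j} \<union> P"
    by (auto simp: P_def simp del: power_Suc intro: order_trans)
  then have "(\<Sum>p | prime p \<and> p \<le> 2 ^ Suc (Suc j). 1 / real p)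
      = (\<Sum>p | prime p \<and> p \<le> 2 ^ Suc j. 1 / real p) + (\<Sum>p\<in>P. 1 / real p)"
    by (simp del: power_Suc, subst sum.union_disjoint) (auto simp: P_def)
  also have "(\<Sum>p\<in>P. 1 / real p) \<le> (\<Sum>p\<in>P. 1 / 2 ^ Suc j)"
    by (intro sum_mono divide_left_mono) (auto simp: P_def simp del: power_Suc)
  also have "\<dots> \<le> 2 / real (Suc j)"
  proof -
    have "real (Suc j) * real (card P) \<le> 2 ^ Suc (Suc j)"
      using card_primes_between_pow2[of "Suc j"] unfolding P_def
      by (metis of_nat_le_iff of_nat_mult of_nat_numeral of_nat_power)
    then show ?thesis
      by (simp add: field_simps)
  qed
  finally show ?case
    using Suc.IH by (simp add: harm_Suc inverse_eq_divide)
qed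

lemma harm_le_ln_add_one: "n \<ge> 1 \<Longrightarrow> harm n \<le> ln (real n) + (1::real)"
  using decseq_harm_diff_ln[unfolded decseq_def, rule_format, of 0 "n - 1"]
  by (simp add: harm_Suc harm_altdef[of 0])

lemma sum_inverse_primes_less_le:
  fixes k :: nat
  assumes "k \<ge> 3"
  shows "(\<Sum>p | prime p \<and> p < k. 1 / real p) \<le> 5 / 2 + 2 * ln (log 2 (real k))"
proof -
  define J where "J = nat \<lceil>log 2 (real k)\<rceil>"
  have "log 2 (real k) > log 2 2"
    using assms by (subst log_less_cancel_iff) auto
  then have "log 2 (real k) > 1"
    by simp
  then have "J \<ge> 2" and J: "real J - 1 \<le> log 2 (real k)"
    unfolding J_def by linarith+
  have "real k = 2 powr (log 2 (real k))"
    using assms by simp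
  also have "\<dots> \<le> 2 powr (real J)"
    unfolding J_def by (intro powr_mono) linarith+
  finally have "k \<le> 2 ^ J"
    by (metis of_nat_le_iff of_nat_numeral of_nat_power powr_realpow zero_less_numeral)
  then have "(\<Sum>p | prime p \<and> p < k. 1 / real p) \<le> (\<Sum>p | prime p \<and> p \<le> 2 ^ Suc (J - 1). 1 / real p)"
    using \<open>J \<ge> 2\<close> by (intro sum_mono2) (auto simp: Suc_diff_1)
  also have "\<dots> \<le> 1 / 2 + 2 * harm (J - 1)"
    by (rule sum_inverse_primes_le_pow2)
  also have "harm (J - 1) \<le> ln (real (J - 1)) + (1::real)"
    using \<open>J \<ge> 2\<close> by (intro harm_le_ln_add_one) auto
  also have "ln (real (J - 1)) \<le> ln (log 2 (real k))"
    using \<open>J \<ge> 2\<close> J by (subst ln_le_cancel_iff) (auto simp: of_nat_diff)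
  finally show ?thesis
    by simp
qed

section \<open>Brun's pure sieve\<close>

lemma sum_subsets_card_le_by_card:
  fixes g :: "nat \<Rightarrow> 'b::comm_semiring_1"
  assumes "finite B"
  shows "(\<Sum>A | A \<subseteq> B \<and> card A \<le> r. g (card A)) = (\<Sum>j\<le>r. of_nat (card B choose j) * g j)"
proof -
  have "(\<Sum>A | A \<subseteq> B \<and> card A \<le> r. g (card A))
      = (\<Sum>j\<le>r. \<Sum>A\<in>{A\<in>{A. A \<subseteq> B \<and> card A \<le> r}. card A = j}. g (card A))"
    by (rule sum.group[symmetric]) (auto simp: assms)
  also have "\<dots> = (\<Sum>j\<le>r. \<Sum>A | A \<subseteq> B \<and> card A = j. g j)"
    by (intro sum.cong refl) auto
  also have "\<dots> = (\<Sum>j\<le>r. of_nat (card B choose j) * g j)"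
    using n_subsets[OF assms] by simp
  finally show ?thesis .
qed

lemma truncated_alternating_sum_subsets_le:
  fixes B :: "'a set"
  assumes "finite B" and "odd r"
  shows "(\<Sum>A | A \<subseteq> B \<and> card A \<le> r. (-1::real) ^ card A) \<le> of_bool (B = {})"
proof (cases "B = {}")
  case True
  then have "{A. A \<subseteq> B \<and> card A \<le> r} = {{}}"
    by auto
  then show ?thesis
    using True by simp
next
  case False
  then obtain n where n: "card B = Suc n"
    using assms(1) by (cases "card B") auto
  have "(\<Sum>A | A \<subseteq> B \<and> card A \<le> r. (-1::real) ^ card A)
      = (\<Sum>j\<le>r. (real (Suc n) gchoose j) * (-1) ^ j)"
    by (simp add: sum_subsets_card_le_by_card[OF assms(1)] n binomial_gbinomial)
  also have "\<dots> = - real (n choose r)"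
    using assms(2) by (simp add: gbinomial_sum_lower_neg binomial_gbinomial)
  finally show ?thesis
    using False by simp
qed

definition sifted :: "nat set \<Rightarrow> nat \<Rightarrow> nat set" where
  "sifted Q D = {d\<in>{1..D}. \<forall>p\<in>Q. \<not> p dvd d}"

lemma card_multiples_atLeastAtMost:
  fixes q D :: nat
  assumes "q \<ge> 1"
  shows "card {d\<in>{1..D}. q dvd d} = D div q"
proof -
  have "{d\<in>{1..D}. q dvd d} = (\<lambda>j. q * j) ` {1..D div q}"
    using assms by (auto simp: less_eq_div_iff_mult_less_eq mult.commute intro!: image_eqI elim!: dvdE)
  moreover have "inj_on (\<lambda>j. q * j) {1..D div q}"
    using assms by (auto simp: inj_on_def)
  ultimately show ?thesis
    by (simp add: card_image)
qed

lemma card_sifted_ge_truncated_sum: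
  fixes Q :: "nat set"
  assumes fin: "finite Q" and prime: "\<forall>p\<in>Q. prime p" and "odd r"
  shows "(\<Sum>A | A \<subseteq> Q \<and> card A \<le> r. (-1) ^ card A * real (D div \<Prod>A)) \<le> real (card (sifted Q D))"
proof -
  define F where "F = {A. A \<subseteq> Q \<and> card A \<le> r}"
  define B where "B d = {p\<in>Q. p dvd d}" for d
  have "finite F"
    using fin by (simp add: F_def)
  have "(\<Sum>A\<in>F. (-1) ^ card A * real (D div \<Prod>A))
      = (\<Sum>A\<in>F. \<Sum>d\<in>{1..D}. if A \<subseteq> B d then (-1::real) ^ card A else 0)"
  proof (intro sum.cong refl)
    fix A
    assume "A \<in> F"
    then have "A \<subseteq> Q"
      by (simp add: F_def)
    then have "finite A" and A_prime: "\<forall>p\<in>A. prime p"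
      using fin prime finite_subset by auto
    then have "{d\<in>{1..D}. A \<subseteq> B d} = {d\<in>{1..D}. \<Prod>A dvd d}"
      using \<open>A \<subseteq> Q\<close> by (auto simp: B_def prod_primes_dvd_iff)
    moreover have "\<Prod>A \<ge> 1"
      using A_prime prime_ge_1_nat by (intro prod_ge_1) auto
    ultimately have "card {d\<in>{1..D}. A \<subseteq> B d} = D div \<Prod>A"
      by (metis card_multiples_atLeastAtMost)
    then show "(-1) ^ card A * real (D div \<Prod>A) = (\<Sum>d\<in>{1..D}. if A \<subseteq> B d then (-1) ^ card A else 0)"
      by (simp add: sum.If_cases Int_def)
  qed
  also have "\<dots> = (\<Sum>d\<in>{1..D}. \<Sum>A\<in>F. if A \<subseteq> B d then (-1::real) ^ card A else 0)"
    by (rule sum.swap)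
  also have "\<dots> = (\<Sum>d\<in>{1..D}. \<Sum>A | A \<subseteq> B d \<and> card A \<le> r. (-1::real) ^ card A)"
  proof (rule sum.cong[OF refl])
    fix d
    have "F \<inter> {A. A \<subseteq> B d} = {A. A \<subseteq> B d \<and> card A \<le> r}"
      by (auto simp: F_def B_def)
    then show "(\<Sum>A\<in>F. if A \<subseteq> B d then (-1::real) ^ card A else 0)
        = (\<Sum>A | A \<subseteq> B d \<and> card A \<le> r. (-1) ^ card A)"
      by (simp add: sum.If_cases \<open>finite F\<close>)
  qed
  also have "\<dots> \<le> (\<Sum>d\<in>{1..D}. of_bool (B d = {}))"
    using fin \<open>odd r\<close> by (intro sum_mono truncated_alternating_sum_subsets_le) (simp add: B_def)
  also have "\<dots> = real (card (sifted Q D))"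
    by (simp add: sifted_def B_def Int_def Ball_def)
  finally show ?thesis
    by (simp add: F_def)
qed

lemma sum_Pow_alternating_inverse_prod:
  fixes Q :: "nat set"
  assumes "finite Q"
  shows "(\<Sum>A\<in>Pow Q. (-1) ^ card A / real (\<Prod>A)) = (\<Prod>p\<in>Q. 1 - 1 / real p)"
  using prod_diff_conv_sum[OF assms, of "\<lambda>_. 1" "\<lambda>p. 1 / real p"]
  by (simp add: prod_dividef)

text \<open>Rankin's trick: a subset with more than \<open>r\<close> elements has weight \<open>3 ^ (card A - r - 1) \<ge> 1\<close>.\<close>

lemma sum_large_subsets_inverse_prod_le:
  fixes Q :: "nat set"
  assumes fin: "finite Q"
  shows "(\<Sum>A\<in>Pow Q - {A. card A \<le> r}. 1 / real (\<Prod>A))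
           \<le> exp (3 * (\<Sum>p\<in>Q. 1 / real p)) / 3 ^ Suc r"
proof -
  have "(\<Sum>A\<in>Pow Q - {A. card A \<le> r}. 1 / real (\<Prod>A))
      \<le> (\<Sum>A\<in>Pow Q - {A. card A \<le> r}. 3 ^ card A / real (\<Prod>A) / 3 ^ Suc r)"
  proof (rule sum_mono)
    fix A
    assume "A \<in> Pow Q - {A. card A \<le> r}"
    then have "(3::real) ^ Suc r \<le> 3 ^ card A"
      by (intro power_increasing) auto
    then have "1 / real (\<Prod>A) \<le> (3 ^ card A / 3 ^ Suc r) / real (\<Prod>A)"
      by (intro divide_right_mono) (auto simp del: of_nat_prod)
    then show "1 / real (\<Prod>A) \<le> 3 ^ card A / real (\<Prod>A) / 3 ^ Suc r"
      by (simp only: divide_divide_eq_left mult.commute)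
  qed
  also have "\<dots> = (\<Sum>A\<in>Pow Q - {A. card A \<le> r}. 3 ^ card A / real (\<Prod>A)) / 3 ^ Suc r"
    by (simp only: sum_divide_distrib)
  also have "\<dots> \<le> (\<Sum>A\<in>Pow Q. 3 ^ card A / real (\<Prod>A)) / 3 ^ Suc r"
    using fin by (intro divide_right_mono sum_mono2) (auto simp del: of_nat_prod)
  also have "(\<Sum>A\<in>Pow Q. 3 ^ card A / real (\<Prod>A)) = (\<Prod>p\<in>Q. 3 / real p + 1)"
    using prod_add[OF fin, of "\<lambda>p. 3 / real p" "\<lambda>_. 1"] by (simp add: prod_dividef)
  also have "\<dots> \<le> (\<Prod>p\<in>Q. exp (3 / real p))"
    by (intro prod_mono) (auto simp: add.commute[of _ 1])
  also have "\<dots> = exp (3 * (\<Sum>p\<in>Q. 1 / real p))"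
    by (simp add: exp_sum[OF fin] sum_distrib_left)
  finally show ?thesis
    by (simp add: divide_right_mono)
qed

lemma exp_minus_two_mult_le_one_minus:
  fixes x :: real
  assumes "0 \<le> x" and "x \<le> 1 / 2"
  shows "exp (- 2 * x) \<le> 1 - x"
proof -
  have "x * x \<le> x * (1 / 2)"
    using assms by (intro mult_left_mono) auto
  then have "- 2 * x \<le> ln (1 - x)"
    using ln_one_minus_pos_lower_bound[OF assms] by (simp add: power2_eq_square)
  then have "exp (- 2 * x) \<le> exp (ln (1 - x))"
    by simp
  also have "\<dots> = 1 - x"
    using assms by simp
  finally show ?thesis .
qed

lemma prod_one_minus_inverse_ge_exp:
  fixes Q :: "nat set"
  assumes "finite Q" and "\<forall>p\<in>Q. 2 \<le> p"
  shows "exp (- 2 * (\<Sum>p\<in>Q. 1 / real p)) \<le> (\<Prod>p\<in>Q. 1 - 1 / real p)"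
proof -
  have "exp (- 2 * (\<Sum>p\<in>Q. 1 / real p)) = (\<Prod>p\<in>Q. exp (- 2 * (1 / real p)))"
    by (simp add: exp_sum[OF assms(1), symmetric] sum_distrib_left)
  also have "\<dots> \<le> (\<Prod>p\<in>Q. 1 - 1 / real p)"
    using assms(2) by (intro prod_mono conjI exp_minus_two_mult_le_one_minus) auto
  finally show ?thesis .
qed

lemma card_subsets_card_le_le:
  assumes "finite Q"
  shows "real (card {A. A \<subseteq> Q \<and> card A \<le> r}) \<le> (real (card Q) + 1) ^ r"
proof -
  have "real (card {A. A \<subseteq> Q \<and> card A \<le> r}) = (\<Sum>j\<le>r. real (card Q choose j) * 1)"
    using sum_subsets_card_le_by_card[OF assms, where r = r and g = "\<lambda>_. 1::real"] by simp
  also have "\<dots> \<le> (\<Sum>j\<le>r. real (r choose j) * real (card Q) ^ j * 1 ^ (r - j))"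
  proof (rule sum_mono)
    fix j
    assume "j \<in> {..r}"
    then have "1 \<le> real (r choose j)"
      by (simp add: Suc_leI)
    moreover have "card Q choose j \<le> card Q ^ j"
      by (cases "j \<le> card Q") (simp_all add: binomial_le_pow binomial_eq_0)
    then have "real (card Q choose j) \<le> real (card Q) ^ j"
      by (simp flip: of_nat_power)
    ultimately show "real (card Q choose j) * 1 \<le> real (r choose j) * real (card Q) ^ j * 1 ^ (r - j)"
      using mult_mono[of 1 "real (r choose j)" "real (card Q choose j)" "real (card Q) ^ j"] by simp
  qed
  also have "\<dots> = (real (card Q) + 1) ^ r"
    by (rule binomial_ring[symmetric])
  finally show ?thesis .
qed

lemma truncated_sum_inverse_prod_ge:
  fixes Q :: "nat set"
  defines "S \<equiv> \<Sum>p\<in>Q. 1 / real p"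
  assumes fin: "finite Q" and "\<forall>p\<in>Q. 2 \<le> p" and r: "2 * exp (5 * S) \<le> 3 ^ Suc r"
  shows "exp (- 2 * S) / 2 \<le> (\<Sum>A | A \<subseteq> Q \<and> card A \<le> r. (-1) ^ card A / real (\<Prod>A))"
proof -
  define F where "F = {A. A \<subseteq> Q \<and> card A \<le> r}"
  have F: "F \<subseteq> Pow Q" "Pow Q - F = Pow Q - {A. card A \<le> r}"
    by (auto simp: F_def)
  have "(\<Sum>A\<in>Pow Q - F. (-1) ^ card A / real (\<Prod>A)) \<le> (\<Sum>A\<in>Pow Q - F. 1 / real (\<Prod>A))"
    by (intro sum_mono divide_right_mono) (auto simp: minus_one_power_iff simp del: of_nat_prod)
  also have "\<dots> \<le> exp (3 * S) / 3 ^ Suc r"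
    unfolding F(2) S_def by (rule sum_large_subsets_inverse_prod_le[OF fin])
  also have "\<dots> \<le> exp (3 * S) / (2 * exp (5 * S))"
    using r by (intro divide_left_mono) auto
  also have "\<dots> = exp (- 2 * S) / 2"
    by (simp add: exp_minus_inverse[symmetric] exp_add[symmetric] field_simps)
  finally have tail: "(\<Sum>A\<in>Pow Q - F. (-1) ^ card A / real (\<Prod>A)) \<le> exp (- 2 * S) / 2" .
  have "exp (- 2 * S) \<le> (\<Sum>A\<in>Pow Q. (-1) ^ card A / real (\<Prod>A))"
    unfolding S_def sum_Pow_alternating_inverse_prod[OF fin]
    by (rule prod_one_minus_inverse_ge_exp) (use assms in auto)
  also have "\<dots> = (\<Sum>A\<in>F. (-1) ^ card A / real (\<Prod>A)) + (\<Sum>A\<in>Pow Q - F. (-1) ^ card A / real (\<Prod>A))"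
    using F(1) fin by (simp add: sum.subset_diff)
  finally show ?thesis
    using tail by (simp add: F_def)
qed

lemma of_nat_div_ge_minus_one:
  assumes "0 < q"
  shows "of_nat n / of_nat q - 1 \<le> (of_nat (n div q) :: 'a::linordered_field)"
proof -
  have "of_nat (n mod q) / of_nat q \<le> (1::'a)"
    using assms by simp
  then show ?thesis
    using of_nat_of_nat_div_aux[of n q, where 'a = 'a] by linarith
qed

theorem card_sifted_ge:
  fixes Q :: "nat set"
  defines "S \<equiv> \<Sum>p\<in>Q. 1 / real p"
  assumes fin: "finite Q" and prime: "\<forall>p\<in>Q. prime p" and "odd r"
    and r: "2 * exp (5 * S) \<le> 3 ^ Suc r"
  shows "real D * exp (- 2 * S) / 2 - (real (card Q) + 1) ^ r \<le> real (card (sifted Q D))"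
proof -
  define F where "F = {A. A \<subseteq> Q \<and> card A \<le> r}"
  have "(\<Sum>A\<in>F. real D * ((-1) ^ card A / real (\<Prod>A)) - 1) \<le> (\<Sum>A\<in>F. (-1) ^ card A * real (D div \<Prod>A))"
  proof (rule sum_mono)
    fix A
    assume "A \<in> F"
    then have "\<Prod>A \<ge> 1"
      using prime prime_ge_1_nat by (intro prod_ge_1) (auto simp: F_def)
    then have "real D / real (\<Prod>A) - 1 \<le> real (D div \<Prod>A)" "real (D div \<Prod>A) \<le> real D / real (\<Prod>A)"
      by (simp_all add: of_nat_div_ge_minus_one of_nat_div_le_of_nat del: of_nat_prod)
    then show "real D * ((-1) ^ card A / real (\<Prod>A)) - 1 \<le> (-1) ^ card A * real (D div \<Prod>A)"
      by (cases "even (card A)") auto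
  qed
  then have "real D * (\<Sum>A\<in>F. (-1) ^ card A / real (\<Prod>A)) - real (card F)
      \<le> (\<Sum>A\<in>F. (-1) ^ card A * real (D div \<Prod>A))"
    by (simp add: sum_subtractf sum_distrib_left)
  moreover have "real D * (exp (- 2 * S) / 2) \<le> real D * (\<Sum>A\<in>F. (-1) ^ card A / real (\<Prod>A))"
    unfolding F_def S_def
    by (intro mult_left_mono truncated_sum_inverse_prod_ge) (use assms prime_ge_2_nat in auto)
  moreover have "real (card F) \<le> (real (card Q) + 1) ^ r"
    unfolding F_def by (rule card_subsets_card_le_le[OF fin])
  moreover have "(\<Sum>A\<in>F. (-1) ^ card A * real (D div \<Prod>A)) \<le> real (card (sifted Q D))"
    unfolding F_def by (rule card_sifted_ge_truncated_sum[OF fin prime \<open>odd r\<close>])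
  ultimately show ?thesis
    by simp
qed

section \<open>Numbers without small prime factors\<close>

definition small_primes :: "nat \<Rightarrow> nat set" where
  "small_primes k = {p. prime p \<and> p < k}"

definition prime_recip_sum :: "nat \<Rightarrow> real" where
  "prime_recip_sum k = (\<Sum>p\<in>small_primes k. 1 / real p)"

definition sieve_depth :: "nat \<Rightarrow> nat" where
  "sieve_depth k = 2 * nat \<lceil>3 * prime_recip_sum k\<rceil> + 1"

definition sieve_threshold :: "nat \<Rightarrow> real" where
  "sieve_threshold k = 4 * (real k + 1) ^ sieve_depth k * exp (2 * prime_recip_sum k)"

text \<open>
  For \<open>D \<ge> sieve_threshold k\<close> the error term \<open>(k + 1) ^ sieve_depth k\<close> of Brun's sieve is at
  most half of its main term \<open>D exp (-2 prime_recip_sum k) / 2\<close>; for smaller \<open>D\<close> the primes in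
  \<open>[k, D]\<close> alone have density at least \<open>1 / (4 ln (sieve_threshold k))\<close>.
\<close>

definition rough_density :: "nat \<Rightarrow> real" where
  "rough_density k = min (1 / (4 * ln (sieve_threshold k))) (exp (- 2 * prime_recip_sum k) / 4)"

lemma prime_recip_sum_nonneg: "0 \<le> prime_recip_sum k"
  by (simp add: prime_recip_sum_def sum_nonneg)

lemma sieve_threshold_ge_4: "4 \<le> sieve_threshold k"
proof -
  have "1 * 1 \<le> (real k + 1) ^ sieve_depth k * exp (2 * prime_recip_sum k)"
    using prime_recip_sum_nonneg[of k] by (intro mult_mono) auto
  then show ?thesis
    by (simp add: sieve_threshold_def)
qed

lemma ln_sieve_threshold_pos: "0 < ln (sieve_threshold k)"
  using sieve_threshold_ge_4[of k] by simp

lemma rough_density_pos: "0 < rough_density k"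
  using ln_sieve_threshold_pos[of k] by (simp add: rough_density_def)

lemma exp_le_pow_sieve_depth: "2 * exp (5 * prime_recip_sum k) \<le> 3 ^ Suc (sieve_depth k)"
proof -
  define S where "S = prime_recip_sum k"
  have "S \<ge> 0"
    by (simp add: S_def prime_recip_sum_nonneg)
  have "2 * exp (5 * S) \<le> exp (S + 2) * exp (5 * S)"
    using exp_ge_add_one_self[of "S + 2"] \<open>S \<ge> 0\<close> by (intro mult_right_mono) auto
  also have "\<dots> = exp (6 * S + 2)"
    by (simp flip: exp_add)
  also have "\<dots> \<le> exp (real (Suc (sieve_depth k)))"
    unfolding sieve_depth_def S_def by simp linarith
  also have "\<dots> = exp 1 ^ Suc (sieve_depth k)"
    by (metis exp_of_nat_mult mult.right_neutral)
  also have "\<dots> \<le> 3 ^ Suc (sieve_depth k)"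
    using exp_le by (intro power_mono) auto
  finally show ?thesis
    by (simp add: S_def)
qed

lemma card_sifted_small_primes_ge_large:
  assumes "sieve_threshold k \<le> real D"
  shows "exp (- 2 * prime_recip_sum k) / 4 * real D \<le> real (card (sifted (small_primes k) D))"
proof -
  define S where "S = prime_recip_sum k"
  define r where "r = sieve_depth k"
  have "card (small_primes k) \<le> k"
    using card_mono[of "{..<k}" "small_primes k"] by (auto simp: small_primes_def)
  then have "(real (card (small_primes k)) + 1) ^ r \<le> (real k + 1) ^ r"
    by (intro power_mono) auto
  also have "\<dots> = sieve_threshold k * exp (- 2 * S) / 4"
    by (simp add: sieve_threshold_def r_def S_def exp_minus field_simps)
  also have "\<dots> \<le> real D * exp (- 2 * S) / 4"
    using assms by (intro divide_right_mono mult_right_mono) auto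
  finally have "real D * exp (- 2 * S) / 2 - real D * exp (- 2 * S) / 4
      \<le> real D * exp (- 2 * S) / 2 - (real (card (small_primes k)) + 1) ^ r"
    by linarith
  also have "\<dots> \<le> real (card (sifted (small_primes k) D))"
    using exp_le_pow_sieve_depth[of k]
    by (unfold S_def r_def prime_recip_sum_def, intro card_sifted_ge)
       (auto simp: small_primes_def sieve_depth_def prime_recip_sum_def)
  finally show ?thesis
    by (simp add: S_def mult.commute)
qed

lemma card_sifted_small_primes_ge_small:
  assumes "200 \<le> D" and "real D \<le> sieve_threshold k"
    and "4 * real k * ln (sieve_threshold k) \<le> real D"
  shows "real D / (4 * ln (sieve_threshold k)) \<le> real (card (sifted (small_primes k) D))"
proof -
  define L where "L = ln (sieve_threshold k)"
  have "L > 0"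
    by (simp add: L_def ln_sieve_threshold_pos)
  have "{p. prime p \<and> k \<le> p \<and> p \<le> D} \<subseteq> sifted (small_primes k) D"
    by (auto simp: sifted_def small_primes_def Suc_le_eq prime_gt_0_nat dest: primes_dvd_imp_eq)
  then have "card {p. prime p \<and> k \<le> p \<and> p \<le> D} \<le> card (sifted (small_primes k) D)"
    by (intro card_mono) (auto simp: sifted_def)
  moreover have "primepi D \<le> card {p. prime p \<and> k \<le> p \<and> p \<le> D} + k"
  proof -
    have "primepi D \<le> card ({p. prime p \<and> k \<le> p \<and> p \<le> D} \<union> {..<k})"
      unfolding primepi_def by (intro card_mono) auto
    then show ?thesis
      using card_Un_le[of "{p. prime p \<and> k \<le> p \<and> p \<le> D}" "{..<k}"] by simp
  qed
  moreover have "real D / (2 * L) \<le> real D / (2 * ln (real D))"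
    using assms(1,2) by (intro divide_left_mono) (auto simp: L_def)
  moreover have "real k \<le> real D / (4 * L)"
    using assms(3) \<open>L > 0\<close> by (simp add: L_def field_simps)
  ultimately show ?thesis
    using primepi_ge[OF assms(1)] by (simp add: L_def field_simps)
qed

lemma card_sifted_small_primes_ge:
  assumes "200 \<le> D" and "4 * real k * ln (sieve_threshold k) \<le> real D"
  shows "rough_density k * real D \<le> real (card (sifted (small_primes k) D))"
proof (cases "sieve_threshold k \<le> real D")
  case True
  have "rough_density k * real D \<le> exp (- 2 * prime_recip_sum k) / 4 * real D"
    by (intro mult_right_mono) (auto simp: rough_density_def)
  also have "\<dots> \<le> real (card (sifted (small_primes k) D))"
    using True by (rule card_sifted_small_primes_ge_large)
  finally show ?thesis .
next
  case False
  have "rough_density k * real D \<le> 1 / (4 * ln (sieve_threshold k)) * real D"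
    by (intro mult_right_mono) (auto simp: rough_density_def)
  also have "\<dots> \<le> real (card (sifted (small_primes k) D))"
    using False assms card_sifted_small_primes_ge_small[of D k] by simp
  finally show ?thesis .
qed

lemma coprime_if_small_primes_not_dvd:
  fixes a b k :: nat
  assumes "0 < a" and "a < k" and "\<forall>p\<in>small_primes k. \<not> p dvd b"
  shows "coprime a b"
proof (rule ccontr)
  assume "\<not> coprime a b"
  then obtain p where "prime p" "p dvd a" "p dvd b"
    using prime_factor_nat[of "gcd a b"] by (auto simp: coprime_iff_gcd_eq_1)
  moreover from \<open>p dvd a\<close> have "p < k"
    using assms(1,2) by (auto dest: dvd_imp_le)
  ultimately show False
    using assms(3) by (auto simp: small_primes_def)
qed

lemma eq_if_mult_eq_mult_small_primes_not_dvd: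
  fixes e e' d d' k :: nat
  assumes "0 < e" "e < k" "0 < e'" "e' < k"
    and "\<forall>p\<in>small_primes k. \<not> p dvd d" and "\<forall>p\<in>small_primes k. \<not> p dvd d'"
    and eq: "e * d = e' * d'"
  shows "e = e'"
proof (rule dvd_antisym)
  have "e dvd e' * d'" and "e' dvd e * d"
    using eq by (metis dvd_triv_left)+
  moreover have "coprime e d'" and "coprime e' d"
    using assms by (simp_all add: coprime_if_small_primes_not_dvd)
  ultimately show "e dvd e'" and "e' dvd e"
    by (simp_all add: coprime_dvd_mult_left_iff)
qed

lemma card_monochromatic_pairs_le:
  assumes "equinumerous_coloring t n c"
  shows "card {(x, y). x \<in> {1..t*n} \<and> y \<in> {1..t*n} \<and> c x = c y} \<le> t * n * n"
proof -
  define C where "C j = {x\<in>{1..t*n}. c x = j}" for j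
  have "{(x, y). x \<in> {1..t*n} \<and> y \<in> {1..t*n} \<and> c x = c y} \<subseteq> (\<Union>j<t. C j \<times> C j)"
    using assms by (fastforce simp: equinumerous_coloring_def C_def)
  then have "card {(x, y). x \<in> {1..t*n} \<and> y \<in> {1..t*n} \<and> c x = c y} \<le> card (\<Union>j<t. C j \<times> C j)"
    by (intro card_mono) (auto simp: C_def)
  also have "\<dots> \<le> (\<Sum>j<t. card (C j \<times> C j))"
    by (rule card_UN_le) simp
  also have "\<dots> = t * n * n"
    using assms by (simp add: equinumerous_coloring_def C_def card_cartesian_product)
  finally show ?thesis .
qed

section \<open>Rainbow progressions\<close>

lemma monochromatic_pair_if_not_rainbow:
  assumes "\<not> has_rainbow_AP k N c" and "1 \<le> a" and "1 \<le> d" and "a + (k - 1) * d \<le> N"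
  shows "\<exists>i j. i < j \<and> j < k \<and> c (a + i * d) = c (a + j * d)"
proof -
  have "\<not> inj_on (\<lambda>i. c (a + i * d)) {..<k}"
    using assms by (auto simp: has_rainbow_AP_def)
  then obtain i j where "i < k" "j < k" "i \<noteq> j" "c (a + i * d) = c (a + j * d)"
    by (auto simp: inj_on_def)
  then show ?thesis
    by (metis linorder_neqE_nat)
qed

lemma eq_if_progressions_share_pair:
  assumes "i < j" "j < k" "i < j'" "j' < k" "0 < d"
    and "\<forall>p\<in>small_primes k. \<not> p dvd d" "\<forall>p\<in>small_primes k. \<not> p dvd d'"
    and x: "a + i * d = a' + i * d'" and y: "a + j * d = a' + j' * d'"
  shows "a = a' \<and> d = d'"
proof -
  have "(j - i) * d = (j' - i) * d'"
    using assms by (simp add: diff_mult_distrib)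
  moreover have "j - i = j' - i"
    using assms calculation eq_if_mult_eq_mult_small_primes_not_dvd[of "j - i" k "j' - i" d d']
    by auto
  ultimately have "d = d'"
    using \<open>i < j\<close> by (metis mult_cancel_left zero_less_diff less_irrefl)
  then show ?thesis
    using x by simp
qed

lemma card_sifted_le_if_no_rainbow_AP:
  assumes col: "equinumerous_coloring t n c" and no_rainbow: "\<not> has_rainbow_AP k (t * n) c"
    and D: "2 * (k * D) \<le> t * n"
  shows "(t * n div 2) * card (sifted (small_primes k) D) \<le> t * n * n * k"
proof -
  define N where "N = t * n"
  define G where "G = {1..N div 2} \<times> sifted (small_primes k) D"
  define M where "M = {(x, y). x \<in> {1..N} \<and> y \<in> {1..N} \<and> c x = c y}"
  have in_range: "a + j * d \<le> N" if "(a, d) \<in> G" "j \<le> k" for a d j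
  proof -
    have "j * d \<le> k * D"
      using that by (intro mult_le_mono) (auto simp: G_def sifted_def)
    then show ?thesis
      using that D by (auto simp: G_def N_def)
  qed
  have "\<exists>i j. i < j \<and> j < k \<and> c (a + i * d) = c (a + j * d)" if "(a, d) \<in> G" for a d
    using that no_rainbow in_range[OF that, of "k - 1"]
    by (intro monochromatic_pair_if_not_rainbow) (auto simp: G_def sifted_def N_def)
  then obtain i j where ij: "\<And>a d. (a, d) \<in> G \<Longrightarrow> i a d < j a d \<and> j a d < k \<and> c (a + i a d * d) = c (a + j a d * d)"
    by metis
  define f where "f = (\<lambda>(a, d). ((a + i a d * d, a + j a d * d), i a d))"
  have "f ` G \<subseteq> M \<times> {..<k}"
  proof (rule image_subsetI, clarify)
    fix a d
    assume "(a, d) \<in> G"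
    then show "f (a, d) \<in> M \<times> {..<k}"
      using ij[of a d] in_range[of a d "i a d"] in_range[of a d "j a d"]
      by (auto simp: f_def M_def G_def)
  qed
  moreover have "inj_on f G"
  proof (rule inj_onI, clarify)
    fix a d a' d'
    assume G: "(a, d) \<in> G" "(a', d') \<in> G" and "f (a, d) = f (a', d')"
    then show "a = a' \<and> d = d'"
      using ij[OF G(1)] ij[OF G(2)]
      by (intro eq_if_progressions_share_pair[of "i a d" "j a d" k "j a' d'"])
         (auto simp: f_def G_def sifted_def)
  qed
  moreover have "finite M"
    by (rule finite_subset[of _ "{1..N} \<times> {1..N}"]) (auto simp: M_def)
  ultimately have "card G \<le> card M * k"
    using card_inj_on_le[of f G "M \<times> {..<k}"] by (simp add: card_cartesian_product)
  also have "\<dots> \<le> t * n * n * k"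
    using card_monochromatic_pairs_le[OF col] by (simp add: M_def N_def)
  finally show ?thesis
    by (simp add: G_def N_def card_cartesian_product)
qed

section \<open>The bound on \<open>T\<close>\<close>

lemma rough_density_le:
  shows "rough_density k \<le> 1 / (4 * ln (sieve_threshold k))" and "rough_density k \<le> 1 / 4"
proof -
  have "exp (- 2 * prime_recip_sum k) \<le> 1"
    using prime_recip_sum_nonneg[of k] by simp
  then show "rough_density k \<le> 1 / (4 * ln (sieve_threshold k))" and "rough_density k \<le> 1 / 4"
    unfolding rough_density_def by linarith+
qed

lemma card_sifted_small_primes_div_ge:
  assumes k: "17 \<le> k" and N: "12 * real k ^ 2 / rough_density k \<le> real N"
  shows "rough_density k * (real N / (4 * real k)) \<le> real (card (sifted (small_primes k) (N div (2 * k))))"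
proof -
  define \<rho> where "\<rho> = rough_density k"
  define L where "L = ln (sieve_threshold k)"
  define x where "x = real N / (4 * real k)"
  define D where "D = N div (2 * k)"
  have "\<rho> > 0" "L > 0" "real k \<ge> 17"
    using k by (simp_all add: \<rho>_def L_def rough_density_pos ln_sieve_threshold_pos)
  then have "4 * L \<le> 1 / \<rho>" "4 \<le> 1 / \<rho>"
    using rough_density_le[of k] by (simp_all add: \<rho>_def L_def field_simps)
  then have "12 * real k ^ 2 * (4 * L) \<le> real N" "12 * real k ^ 2 * 4 \<le> real N"
    using mult_left_mono[of "4 * L" "1 / \<rho>" "12 * real k ^ 2"] mult_left_mono[of 4 "1 / \<rho>" "12 * real k ^ 2"] N
    by (simp_all add: \<rho>_def)
  then have x: "12 * real k \<le> x" "12 * real k * L \<le> x"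
    using k by (simp_all add: x_def field_simps power2_eq_square)
  have "real N / (2 * real k) - 1 \<le> real D"
    using of_nat_div_ge_minus_one[of "2 * k" N] k by (simp add: D_def)
  moreover have "real N / (2 * real k) = 2 * x"
    by (simp add: x_def)
  ultimately have D: "x \<le> real D"
    using x \<open>real k \<ge> 17\<close> by linarith
  have "0 \<le> real k * L"
    using \<open>L > 0\<close> by simp
  then have "200 \<le> real D" "4 * real k * L \<le> real D"
    using D x \<open>real k \<ge> 17\<close> by linarith+
  then have "\<rho> * real D \<le> real (card (sifted (small_primes k) D))"
    using card_sifted_small_primes_ge[of D k] by (simp add: \<rho>_def L_def)
  then show ?thesis
    using D \<open>\<rho> > 0\<close> unfolding \<rho>_def x_def D_def by (meson mult_left_mono order.trans less_imp_le)
qed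

lemma good_if_gt:
  assumes k: "17 \<le> k" and t: "12 * real k ^ 2 / rough_density k < real t"
  shows "good k t"
  unfolding good_def
proof (intro allI impI)
  fix n c
  assume "1 \<le> n" and col: "equinumerous_coloring t n c"
  define \<rho> where "\<rho> = rough_density k"
  define N where "N = t * n"
  define R where "R = sifted (small_primes k) (N div (2 * k))"
  have "\<rho> > 0"
    by (simp add: \<rho>_def rough_density_pos)
  have "t \<le> N"
    using \<open>1 \<le> n\<close> by (simp add: N_def)
  then have "12 * real k ^ 2 / \<rho> \<le> real N"
    using t by (simp add: \<rho>_def)
  then have card: "\<rho> * (real N / (4 * real k)) \<le> real (card R)"
    using card_sifted_small_primes_div_ge[OF k] by (simp add: \<rho>_def R_def)
  have "48 \<le> 12 * real k ^ 2 / \<rho>"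
    using k \<open>\<rho> > 0\<close> rough_density_le(2)[of k] frac_le[of "12 * real k ^ 2" 12 \<rho> "1 / 4"]
    by (simp add: \<rho>_def one_le_power)
  then have "real N / 3 \<le> real (N div 2)" and "real N > 0"
    using of_nat_div_ge_minus_one[of 2 N, where 'a = real] \<open>12 * real k ^ 2 / \<rho> \<le> real N\<close> by simp_all
  show "has_rainbow_AP k (t * n) c"
  proof (rule ccontr)
    assume "\<not> has_rainbow_AP k (t * n) c"
    moreover have "2 * (k * (N div (2 * k))) \<le> t * n"
      using div_times_less_eq_dividend[of N "2 * k"] by (simp add: N_def ac_simps)
    ultimately have "real (N div 2) * real (card R) \<le> real N * real n * real k"
      using card_sifted_le_if_no_rainbow_AP[OF col] by (simp add: R_def N_def flip: of_nat_mult)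
    moreover have "real N / 3 * (\<rho> * (real N / (4 * real k))) \<le> real (N div 2) * real (card R)"
      using card \<open>real N / 3 \<le> real (N div 2)\<close> \<open>\<rho> > 0\<close> \<open>real N > 0\<close> by (intro mult_mono) auto
    ultimately have "real N / 3 * (\<rho> * (real N / (4 * real k))) * (12 * real k) \<le> real N * real n * real k * (12 * real k)"
      by (intro mult_right_mono) auto
    then have "real N * (\<rho> * real N) \<le> real N * (12 * real k ^ 2 * real n)"
      using k by (simp add: power2_eq_square mult_ac)
    then have "\<rho> * real N \<le> 12 * real k ^ 2 * real n"
      using \<open>real N > 0\<close> by (simp add: mult_le_cancel_left_pos)
    then have "real n * (\<rho> * real t) \<le> real n * (12 * real k ^ 2)"
      by (simp add: N_def mult_ac)
    then show False
      using t \<open>1 \<le> n\<close> \<open>\<rho> > 0\<close> by (simp add: \<rho>_def mult_le_cancel_left_pos field_simps)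
  qed
qed

lemma T_le_div_rough_density:
  assumes "17 \<le> k"
  shows "real (T k) \<le> 12 * real k ^ 2 / rough_density k + 1"
proof -
  define b where "b = 12 * real k ^ 2 / rough_density k"
  define t where "t = nat \<lfloor>b\<rfloor> + 1"
  have "b \<ge> 0"
    using rough_density_pos[of k] by (simp add: b_def)
  then have "b < real t" "real t \<le> b + 1"
    by (simp_all add: t_def) linarith+
  then have "T k \<le> t"
    unfolding T_def using good_if_gt[OF assms, of t] by (simp add: Least_le b_def)
  then show ?thesis
    using \<open>real t \<le> b + 1\<close> by (simp add: b_def)
qed

lemma inverse_rough_density_le:
  "1 / rough_density k \<le> 4 * ln (sieve_threshold k) + 4 * exp (2 * prime_recip_sum k)"
proof -
  have "0 < ln (sieve_threshold k)"
    by (rule ln_sieve_threshold_pos)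
  then show ?thesis
    by (cases "1 / (4 * ln (sieve_threshold k)) \<le> exp (- 2 * prime_recip_sum k) / 4")
       (simp_all add: rough_density_def min_def exp_minus field_simps)
qed

lemma prime_recip_sum_le:
  assumes "3 \<le> k"
  shows "prime_recip_sum k \<le> 5 / 2 + 2 * ln (log 2 (real k))"
  using sum_inverse_primes_less_le[OF assms] by (simp add: prime_recip_sum_def small_primes_def)

definition T_factor :: "real \<Rightarrow> real" where
  "T_factor x = (let s = 5 / 2 + 2 * ln (log 2 x) in
     48 * (ln 4 + (6 * s + 3) * ln (x + 1) + 2 * s + exp (2 * s)) + 1 / x ^ 2)"

lemma T_le_T_factor:
  assumes "17 \<le> k"
  shows "real (T k) \<le> real k ^ 2 * T_factor (real k)"
proof -
  define S where "S = prime_recip_sum k"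
  define s where "s = 5 / 2 + 2 * ln (log 2 (real k))"
  define B where "B = ln 4 + (6 * s + 3) * ln (real k + 1) + 2 * s + exp (2 * s)"
  have "S \<le> s"
    using prime_recip_sum_le[of k] assms by (simp add: S_def s_def)
  have "real (sieve_depth k) = 2 * of_int \<lceil>3 * S\<rceil> + 1"
    using prime_recip_sum_nonneg[of k] by (simp add: sieve_depth_def S_def)
  then have "real (sieve_depth k) \<le> 6 * S + 3"
    using of_int_ceiling_le_add_one[of "3 * S"] by linarith
  then have "real (sieve_depth k) * ln (real k + 1) \<le> (6 * s + 3) * ln (real k + 1)"
    using \<open>S \<le> s\<close> by (intro mult_right_mono) auto
  moreover have "ln (sieve_threshold k) = ln 4 + real (sieve_depth k) * ln (real k + 1) + 2 * S"
    by (simp add: sieve_threshold_def S_def ln_mult ln_realpow)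
  moreover have "exp (2 * S) \<le> exp (2 * s)"
    using \<open>S \<le> s\<close> by simp
  ultimately have "1 / rough_density k \<le> 4 * B"
    using inverse_rough_density_le[of k] \<open>S \<le> s\<close> unfolding S_def B_def by argo
  then have "12 * real k ^ 2 * (1 / rough_density k) \<le> 12 * real k ^ 2 * (4 * B)"
    by (rule mult_left_mono) simp
  then have "real (T k) \<le> real k ^ 2 * (48 * B) + 1"
    using T_le_div_rough_density[OF assms] by simp
  also have "\<dots> = real k ^ 2 * T_factor (real k)"
    using assms by (simp add: T_factor_def B_def s_def Let_def algebra_simps)
  finally show ?thesis .
qed

lemma T_factor_le_eventually: "\<forall>\<^sub>F x in at_top. T_factor x \<le> exp (ln (ln x) ^ 2)"
  unfolding T_factor_def Let_def by real_asymp

theorem theorem1: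
  shows "\<exists>\<epsilon> :: nat \<Rightarrow> real. (\<epsilon> \<longlonglongrightarrow> 0) \<and>
    (\<forall>\<^sub>F k in sequentially.
       real (T k) \<le> (real k)^2 * exp ((1 + \<epsilon> k) * (ln (ln (real k)))^2))"
proof (intro exI conjI)
  show "(\<lambda>_. 0) \<longlonglongrightarrow> (0::real)"
    by simp
  have "\<forall>\<^sub>F k in sequentially. T_factor (real k) \<le> exp (ln (ln (real k)) ^ 2)"
    using T_factor_le_eventually filterlim_real_sequentially by (rule eventually_compose_filterlim)
  then show "\<forall>\<^sub>F k in sequentially. real (T k) \<le> (real k)^2 * exp ((1 + 0) * (ln (ln (real k)))^2)"
    using eventually_ge_at_top[of "17::nat"]
  proof eventually_elim
    case (elim k)
    have "real (T k) \<le> real k ^ 2 * T_factor (real k)"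
      using elim(2) by (rule T_le_T_factor)
    also have "\<dots> \<le> real k ^ 2 * exp (ln (ln (real k)) ^ 2)"
      using elim(1) by (intro mult_left_mono) auto
    finally show ?case
      by simp
  qed
qed

end
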